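(* Let $n \ge 1$ be an integer, let $SV_n = \{C_{1,j} : 1 \le j \le n\}$ (the vertical straight polyomino $R_{1,n}$) and $SH_n = \{C_{i,1} : 1 \le i \le n\}$ (the horizontal straight polyomino $R_{n,1}$), and consider packings on the $n \times n$ board. Then $$\mathrm{cp}_{\mathrm{free}}(SV_n) = \mathrm{cp}_{\mathrm{free}}(SH_n) = \mathrm{cp}_{\mathrm{fixed}}(SV_n) = \mathrm{cp}_{\mathrm{fixed}}(SH_n) = n.$$
   Context: For integers $i,j$, $C_{i,j}$ denotes the unit square cell in column $i$ and row $j$ of the integer grid (columns numbered left to right, rows numbered top to bottom). A polyomino is a finite set of cells; its size is its number of cells. For a polyomino $\mathcal{P}$ of size $n$ the board is $\mathbb{B} = \{C_{i,j} : 1 \le i,j \le n\}$. The shift of $\mathcal{P}$ by integers $(c,d)$ is $\mathcal{P}+(c,d) = \{C_{x+c,y+d} : C_{x,y} \in \mathcal{P}\}$. A set of polyominoes is a valid arrangement if each of them is contained in $\mathbb{B}$ and they are pairwise disjoint (as sets of cells). A fixed copy of $\mathcal{P}$ is any shift of $\mathcal{P}$; a free copy is any shift of any rotation of $\mathcal{P}$ by a multiple of $90^\circ$ (for $SV_n$ and $SH_n$ the free copies are exactly the shifts of $SV_n$ and of $SH_n$). A fixed (resp. free) packing of $\mathcal{P}$ is a set of fixed (resp. free) copies of $\mathcal{P}$ forming a valid arrangement such that adding any further fixed (resp. free) copy of $\mathcal{P}$ yields an invalid arrangement. The clumsy fixed packing number $\mathrm{cp}_{\mathrm{fixed}}(\mathcal{P})$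 (resp. clumsy free packing number $\mathrm{cp}_{\mathrm{free}}(\mathcal{P})$) is the minimum number of polyominoes in a fixed (resp. free) packing of $\mathcal{P}$ on the $n\times n$ board. *)

theory Defs
  imports Main
begin

text \<open>A cell C_{i,j} is represented by the pair (i,j) :: int \<times> int
  (column i, row j). A polyomino is a finite set of cells.\<close>

type_synonym cell = "int \<times> int"
type_synonym polyomino = "cell set"

definition board :: "nat \<Rightarrow> polyomino" where
  "board n = {(i, j). 1 \<le> i \<and> i \<le> int n \<and> 1 \<le> j \<and> j \<le> int n}"

definition shift :: "polyomino \<Rightarrow> int \<Rightarrow> int \<Rightarrow> polyomino" where
  "shift P c d = (\<lambda>(x, y). (x + c, y + d)) ` P"

text \<open>Rotation by 90 degrees (about the origin; any other centre differs by a shift).\<close>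
definition rot90 :: "polyomino \<Rightarrow> polyomino" where
  "rot90 P = (\<lambda>(x, y). (- y, x)) ` P"

definition fixed_copy :: "polyomino \<Rightarrow> polyomino \<Rightarrow> bool" where
  "fixed_copy P Q \<longleftrightarrow> (\<exists>c d. Q = shift P c d)"

definition free_copy :: "polyomino \<Rightarrow> polyomino \<Rightarrow> bool" where
  "free_copy P Q \<longleftrightarrow> (\<exists>k::nat. \<exists>c d. Q = shift ((rot90 ^^ k) P) c d)"

definition valid_arrangement :: "nat \<Rightarrow> polyomino set \<Rightarrow> bool" where
  "valid_arrangement n S \<longleftrightarrow>
     (\<forall>Q\<in>S. Q \<subseteq> board n) \<and> (\<forall>Q\<in>S. \<forall>R\<in>S. Q \<noteq> R \<longrightarrow> Q \<inter> R = {})"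

definition packing :: "(polyomino \<Rightarrow> polyomino \<Rightarrow> bool) \<Rightarrow> polyomino \<Rightarrow> polyomino set \<Rightarrow> bool" where
  "packing copy P S \<longleftrightarrow>
     (\<forall>Q\<in>S. copy P Q) \<and> valid_arrangement (card P) S \<and>
     (\<forall>Q. copy P Q \<and> Q \<notin> S \<longrightarrow> \<not> valid_arrangement (card P) (insert Q S))"

definition cp_fixed :: "polyomino \<Rightarrow> nat" where
  "cp_fixed P = (LEAST k. \<exists>S. packing fixed_copy P S \<and> card S = k)"

definition cp_free :: "polyomino \<Rightarrow> nat" where
  "cp_free P = (LEAST k. \<exists>S. packing free_copy P S \<and> card S = k)"

definition SV :: "nat \<Rightarrow> polyomino" where
  "SV n = {(1, j) | j. 1 \<le> j \<and> j \<le> int n}"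

definition SH :: "nat \<Rightarrow> polyomino" where
  "SH n = {(i, 1) | i. 1 \<le> i \<and> i \<le> int n}"

end

(* A straight n-omino fits into the n x n board only as a full column or a full row.
   Columns are pairwise disjoint, rows are pairwise disjoint, and every column meets every
   row.  So a maximal arrangement of fixed copies is forced to be the set of all n columns
   (or all n rows), and a maximal arrangement of free copies, which cannot mix columns with
   rows, is either all columns or all rows; in every case it has exactly n pieces. *)

theory Submission
  imports Defs
begin

definition vseg :: "nat \<Rightarrow> int \<Rightarrow> int \<Rightarrow> polyomino" where
  "vseg n a b = {a} \<times> {b + 1..b + int n}"

definition hseg :: "nat \<Rightarrow> int \<Rightarrow> int \<Rightarrow> polyomino" where
  "hseg n a b = {a + 1..a + int n} \<times> {b}"

definition segments :: "nat \<Rightarrow> polyomino set" where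
  "segments n = {vseg n a b | a b. True} \<union> {hseg n a b | a b. True}"

lemma SV_eq_vseg: "SV n = vseg n 1 0"
  unfolding SV_def vseg_def by auto

lemma SH_eq_hseg: "SH n = hseg n 0 1"
  unfolding SH_def hseg_def by auto

lemma card_vseg: "card (vseg n a b) = n"
  unfolding vseg_def by (simp add: card_cartesian_product)

lemma card_hseg: "card (hseg n a b) = n"
  unfolding hseg_def by (simp add: card_cartesian_product)

lemma shift_vseg: "shift (vseg n a b) c d = vseg n (a + c) (b + d)"
  unfolding shift_def vseg_def by (auto simp: image_iff algebra_simps intro!: bexI[of _ "_ - d"])

lemma shift_hseg: "shift (hseg n a b) c d = hseg n (a + c) (b + d)"
  unfolding shift_def hseg_def by (auto simp: image_iff algebra_simps intro!: bexI[of _ "_ - c"])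

lemma rot90_vseg: "rot90 (vseg n a b) = hseg n (- b - int n - 1) a"
proof -
  have "rot90 (vseg n a b) = (\<lambda>y. (- y, a)) ` {b + 1..b + int n}"
    unfolding rot90_def vseg_def by auto
  also have "\<dots> = hseg n (- b - int n - 1) a"
    unfolding hseg_def by (auto simp: image_iff intro!: bexI[of _ "- _"])
  finally show ?thesis .
qed

lemma rot90_hseg: "rot90 (hseg n a b) = vseg n (- b) a"
  unfolding rot90_def hseg_def vseg_def by auto

lemma fixed_copy_vseg_iff: "fixed_copy (vseg n a b) Q \<longleftrightarrow> (\<exists>a' b'. Q = vseg n a' b')"
proof
  assume "\<exists>a' b'. Q = vseg n a' b'"
  then obtain a' b' where "Q = vseg n a' b'" by blast
  then have "Q = shift (vseg n a b) (a' - a) (b' - b)"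
    by (simp add: shift_vseg)
  then show "fixed_copy (vseg n a b) Q"
    unfolding fixed_copy_def by blast
qed (auto simp: fixed_copy_def shift_vseg)

lemma fixed_copy_hseg_iff: "fixed_copy (hseg n a b) Q \<longleftrightarrow> (\<exists>a' b'. Q = hseg n a' b')"
proof
  assume "\<exists>a' b'. Q = hseg n a' b'"
  then obtain a' b' where "Q = hseg n a' b'" by blast
  then have "Q = shift (hseg n a b) (a' - a) (b' - b)"
    by (simp add: shift_hseg)
  then show "fixed_copy (hseg n a b) Q"
    unfolding fixed_copy_def by blast
qed (auto simp: fixed_copy_def shift_hseg)

lemma rot90_segments: "Q \<in> segments n \<Longrightarrow> rot90 Q \<in> segments n"
  unfolding segments_def by (force simp: rot90_vseg rot90_hseg)

lemma shift_segments: "Q \<in> segments n \<Longrightarrow> shift Q c d \<in> segments n"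
  unfolding segments_def by (force simp: shift_vseg shift_hseg)

lemma free_copy_segments_iff:
  assumes "P \<in> segments n"
  shows "free_copy P Q \<longleftrightarrow> Q \<in> segments n"
proof
  assume "free_copy P Q"
  then obtain k c d where Q: "Q = shift ((rot90 ^^ k) P) c d"
    unfolding free_copy_def by blast
  have "(rot90 ^^ k) P \<in> segments n"
    using assms by (induction k) (simp_all add: rot90_segments)
  then show "Q \<in> segments n"
    unfolding Q by (rule shift_segments)
next
  assume Q: "Q \<in> segments n"
  have "fixed_copy P Q \<or> fixed_copy (rot90 P) Q"
    using assms Q unfolding segments_def
    by (force simp: fixed_copy_vseg_iff fixed_copy_hseg_iff rot90_vseg rot90_hseg)
  then show "free_copy P Q"
    unfolding free_copy_def fixed_copy_def by (metis funpow_0 funpow_Suc_right o_apply)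
qed

lemma vseg_subset_board_iff:
  assumes "n \<ge> 1"
  shows "vseg n a b \<subseteq> board n \<longleftrightarrow> a \<in> {1..int n} \<and> b = 0"
proof
  assume "vseg n a b \<subseteq> board n"
  moreover have "(a, b + 1) \<in> vseg n a b" "(a, b + int n) \<in> vseg n a b"
    using assms by (auto simp: vseg_def)
  ultimately have "(a, b + 1) \<in> board n" "(a, b + int n) \<in> board n"
    by blast+
  then show "a \<in> {1..int n} \<and> b = 0"
    by (auto simp: board_def)
qed (auto simp: vseg_def board_def)

lemma hseg_subset_board_iff:
  assumes "n \<ge> 1"
  shows "hseg n a b \<subseteq> board n \<longleftrightarrow> a = 0 \<and> b \<in> {1..int n}"
proof
  assume "hseg n a b \<subseteq> board n"
  moreover have "(a + 1, b) \<in> hseg n a b" "(a + int n, b) \<in> hseg n a b"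
    using assms by (auto simp: hseg_def)
  ultimately have "(a + 1, b) \<in> board n" "(a + int n, b) \<in> board n"
    by blast+
  then show "a = 0 \<and> b \<in> {1..int n}"
    by (auto simp: board_def)
qed (auto simp: hseg_def board_def)

lemma card_segments: "Q \<in> segments n \<Longrightarrow> card Q = n"
  unfolding segments_def by (auto simp: card_vseg card_hseg)

definition placements :: "(polyomino \<Rightarrow> polyomino \<Rightarrow> bool) \<Rightarrow> polyomino \<Rightarrow> polyomino set" where
  "placements copy P = {Q. copy P Q \<and> Q \<subseteq> board (card P)}"

lemma valid_arrangement_iff: "valid_arrangement n S \<longleftrightarrow> S \<subseteq> Pow (board n) \<and> pairwise disjnt S"
  unfolding valid_arrangement_def pairwise_def disjnt_def by blast

lemma pairwise_disjnt_insert_iff: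
  "Q \<notin> S \<Longrightarrow> pairwise disjnt (insert Q S) \<longleftrightarrow> pairwise disjnt S \<and> (\<forall>R\<in>S. disjnt Q R)"
  unfolding pairwise_insert by (auto dest: disjnt_sym)

lemma packing_iff:
  "packing copy P S \<longleftrightarrow>
     S \<subseteq> placements copy P \<and> pairwise disjnt S \<and>
     (\<forall>Q \<in> placements copy P - S. \<exists>R \<in> S. \<not> disjnt Q R)"
  unfolding packing_def placements_def valid_arrangement_iff
  by (auto simp: pairwise_disjnt_insert_iff)

lemma packing_eq_if_pairwise_disjnt:
  assumes "packing copy P S" "S \<subseteq> A" "A \<subseteq> placements copy P" "pairwise disjnt A"
  shows "S = A"
proof (rule ccontr)
  assume "S \<noteq> A"
  then obtain Q where Q: "Q \<in> A" "Q \<notin> S"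
    using assms(2) by blast
  then have "Q \<in> placements copy P - S"
    using assms(3) by blast
  then obtain R where "R \<in> S" "\<not> disjnt Q R"
    using assms(1) unfolding packing_iff by blast
  with Q assms(2,4) show False
    by (metis pairwise_def subsetD)
qed

lemma packing_iff_eq_placements:
  assumes "pairwise disjnt (placements copy P)"
  shows "packing copy P S \<longleftrightarrow> S = placements copy P"
  using packing_eq_if_pairwise_disjnt[of copy P S "placements copy P"] assms
  by (auto simp: packing_iff)

lemma packing_iff_crossing_families:
  assumes placements: "placements copy P = A \<union> B"
    and disjnt_A: "pairwise disjnt A" and disjnt_B: "pairwise disjnt B"
    and "A \<noteq> {}" "B \<noteq> {}"
    and crossing: "\<And>X Y. X \<in> A \<Longrightarrow> Y \<in> B \<Longrightarrow> \<not> disjnt X Y"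
  shows "packing copy P S \<longleftrightarrow> S = A \<or> S = B"
proof
  assume S: "packing copy P S"
  then have S_placements: "S \<subseteq> A \<union> B" and disjnt_S: "pairwise disjnt S"
    using placements by (simp_all add: packing_iff)
  show "S = A \<or> S = B"
  proof (cases "S \<subseteq> A")
    case True
    then have "S = A"
      using packing_eq_if_pairwise_disjnt[OF S _ _ disjnt_A] placements by simp
    then show ?thesis ..
  next
    case False
    then obtain Y where Y: "Y \<in> S" "Y \<in> B" "Y \<notin> A"
      using S_placements by blast
    have "X \<notin> S" if "X \<in> A" for X
      using crossing[OF that Y(2)] disjnt_S Y(1,3) that unfolding pairwise_def by metis
    then have "S \<subseteq> B"
      using S_placements by blast
    then have "S = B"
      using packing_eq_if_pairwise_disjnt[OF S _ _ disjnt_B] placements by simp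
    then show ?thesis ..
  qed
next
  assume "S = A \<or> S = B"
  then show "packing copy P S"
  proof
    assume "S = A"
    have "\<exists>R\<in>A. \<not> disjnt Q R" if "Q \<in> placements copy P - A" for Q
    proof -
      obtain X where "X \<in> A"
        using \<open>A \<noteq> {}\<close> by blast
      moreover have "Q \<in> B"
        using that placements by auto
      ultimately show ?thesis
        using crossing disjnt_sym by blast
    qed
    then show ?thesis
      unfolding packing_iff \<open>S = A\<close> placements using disjnt_A by auto
  next
    assume "S = B"
    have "\<exists>R\<in>B. \<not> disjnt Q R" if "Q \<in> placements copy P - B" for Q
    proof -
      obtain Y where "Y \<in> B"
        using \<open>B \<noteq> {}\<close> by blast
      moreover have "Q \<in> A"
        using that placements by auto
      ultimately show ?thesis
        using crossing by blast
    qed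
    then show ?thesis
      unfolding packing_iff \<open>S = B\<close> placements using disjnt_B by auto
  qed
qed

lemma Least_card_packing_eqI:
  assumes "packing copy P S" "\<And>S. packing copy P S \<Longrightarrow> card S = m"
  shows "(LEAST k. \<exists>S. packing copy P S \<and> card S = k) = m"
  by (rule Least_equality) (use assms in auto)

definition columns :: "nat \<Rightarrow> polyomino set" where
  "columns n = (\<lambda>a. vseg n a 0) ` {1..int n}"

definition rows :: "nat \<Rightarrow> polyomino set" where
  "rows n = (\<lambda>b. hseg n 0 b) ` {1..int n}"

lemma pairwise_disjnt_columns: "pairwise disjnt (columns n)"
  unfolding columns_def pairwise_def disjnt_def vseg_def by auto

lemma pairwise_disjnt_rows: "pairwise disjnt (rows n)"
  unfolding rows_def pairwise_def disjnt_def hseg_def by auto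

lemma column_meets_row: "X \<in> columns n \<Longrightarrow> Y \<in> rows n \<Longrightarrow> \<not> disjnt X Y"
  unfolding columns_def rows_def disjnt_def vseg_def hseg_def by auto

lemma card_columns:
  assumes "n \<ge> 1"
  shows "card (columns n) = n"
proof -
  have "inj_on (\<lambda>a. vseg n a 0) {1..int n}"
    using assms by (auto simp: inj_on_def vseg_def)
  then show ?thesis
    unfolding columns_def by (simp add: card_image)
qed

lemma card_rows:
  assumes "n \<ge> 1"
  shows "card (rows n) = n"
proof -
  have "inj_on (\<lambda>b. hseg n 0 b) {1..int n}"
    using assms by (auto simp: inj_on_def hseg_def)
  then show ?thesis
    unfolding rows_def by (simp add: card_image)
qed

lemma placements_fixed_vseg:
  assumes "n \<ge> 1"
  shows "placements fixed_copy (vseg n a b) = columns n"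
proof -
  have "placements fixed_copy (vseg n a b) = {vseg n a' b' | a' b'. vseg n a' b' \<subseteq> board n}"
    unfolding placements_def card_vseg fixed_copy_vseg_iff by blast
  also have "\<dots> = columns n"
    unfolding columns_def vseg_subset_board_iff[OF assms] by blast
  finally show ?thesis .
qed

lemma placements_fixed_hseg:
  assumes "n \<ge> 1"
  shows "placements fixed_copy (hseg n a b) = rows n"
proof -
  have "placements fixed_copy (hseg n a b) = {hseg n a' b' | a' b'. hseg n a' b' \<subseteq> board n}"
    unfolding placements_def card_hseg fixed_copy_hseg_iff by blast
  also have "\<dots> = rows n"
    unfolding rows_def hseg_subset_board_iff[OF assms] by blast
  finally show ?thesis .
qed

lemma placements_free_segment:
  assumes "n \<ge> 1" "P \<in> segments n"
  shows "placements free_copy P = columns n \<union> rows n"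
proof -
  have "placements free_copy P =
      {vseg n a b | a b. vseg n a b \<subseteq> board n} \<union> {hseg n a b | a b. hseg n a b \<subseteq> board n}"
    unfolding placements_def card_segments[OF assms(2)] free_copy_segments_iff[OF assms(2)]
      segments_def by blast
  also have "\<dots> = columns n \<union> rows n"
    unfolding columns_def rows_def vseg_subset_board_iff[OF assms(1)]
      hseg_subset_board_iff[OF assms(1)] by blast
  finally show ?thesis .
qed

theorem theorem1:
  fixes n :: nat
  assumes "n \<ge> 1"
  shows "cp_free (SV n) = n \<and> cp_free (SH n) = n \<and> cp_fixed (SV n) = n \<and> cp_fixed (SH n) = n"
proof -
  have SV: "SV n \<in> segments n" and SH: "SH n \<in> segments n"
    unfolding segments_def SV_eq_vseg SH_eq_hseg by blast+
  have card: "card (columns n) = n" "card (rows n) = n"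
    using assms by (simp_all add: card_columns card_rows)
  have fixed_SV: "packing fixed_copy (SV n) S \<longleftrightarrow> S = columns n" for S
    using packing_iff_eq_placements pairwise_disjnt_columns placements_fixed_vseg[OF assms]
    by (metis SV_eq_vseg)
  have fixed_SH: "packing fixed_copy (SH n) S \<longleftrightarrow> S = rows n" for S
    using packing_iff_eq_placements pairwise_disjnt_rows placements_fixed_hseg[OF assms]
    by (metis SH_eq_hseg)
  have free: "packing free_copy P S \<longleftrightarrow> S = columns n \<or> S = rows n" if "P \<in> segments n" for P S
    using assms card
    by (intro packing_iff_crossing_families placements_free_segment[OF assms that]
        pairwise_disjnt_columns pairwise_disjnt_rows column_meets_row) auto
  have "cp_free (SV n) = n"
    unfolding cp_free_def
    by (rule Least_card_packing_eqI[of _ _ "columns n"]) (auto simp: free[OF SV] card)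
  moreover have "cp_free (SH n) = n"
    unfolding cp_free_def
    by (rule Least_card_packing_eqI[of _ _ "columns n"]) (auto simp: free[OF SH] card)
  moreover have "cp_fixed (SV n) = n"
    unfolding cp_fixed_def
    by (rule Least_card_packing_eqI[of _ _ "columns n"]) (simp_all add: fixed_SV card)
  moreover have "cp_fixed (SH n) = n"
    unfolding cp_fixed_def
    by (rule Least_card_packing_eqI[of _ _ "rows n"]) (simp_all add: fixed_SH card)
  ultimately show ?thesis
    by blast
qed

end
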